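(* Let $d,H\in\mathbb{N}$ and $0\le a\le b\le1$. Consider an arbitrary sequence of cost functions $\ell_t:\mathcal{X}_{d,H,a,b}\to\mathbb{R}$ which are convex and $L$-Lipschitz with respect to $\|\cdot\|_{d,H}$. Then the iterates $z_t=(p_t,M_t^{[1:H]})$ of Lazy Mirror Descent on $\mathcal{X}_{d,H,a,b}$ with step size $\eta=\sqrt{2dH\ln(d)}/(L\sqrt T)$, regularizer $R_{d,H}$ and losses $\ell_1,\dots,\ell_T$ satisfy $$\sum_{t=1}^T\ell_t(p_t,M_t^{[1:H]})-\min_{(p,M^{[1:H]})\in\mathcal{X}_{d,H,a,b}}\sum_{t=1}^T\ell_t(p,M^{[1:H]})\le L\sqrt{32dH\ln(d)\cdot T}.$$ Moreover, with $\beta:=\sqrt{2dH\ln(d)}/\sqrt T$, for all $t\in[T-1]$ we have $\|p_t-p_{t+1}\|_1\le\beta$ and $\max_{h\in[H]}\|M_t^{[h]}-M_{t+1}^{[h]}\|_{1\to1}\le\beta$.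
   Context: $\Delta^d_a:=a\Delta^d$ (scaled probability simplex), $\mathbb{S}^d_a:=\{aM:M\text{ a }d\times d\text{ column-stochastic matrix}\}$, and $\mathcal{X}_{d,H,a,b}:=\bigcup_{a'\in[a,b]}\Delta^d_{a'}\times(\mathbb{S}^d_{a'})^H\subset\mathbb{R}^d\times(\mathbb{R}^{d\times d})^H\cong\mathbb{R}^{d+Hd^2}$. Norm: $\|(p,M^{[1:H]})\|_{d,H}^2:=\|p\|_1^2+\sum_{h=1}^H\sum_{j=1}^d\|M^{[h]}_{\cdot,j}\|_1^2$, where $M_{\cdot,j}$ is the $j$-th column; $\|M\|_{1\to1}:=\sup_{\|x\|_1=1}\|Mx\|_1$. For $v\in\mathbb{R}^d_{\ge0}$ with $\sum_jv_j\le1$, $v^c:=1-\sum_jv_j$ and $\mathrm{Ent}(v):=v^c\ln\frac1{v^c}+\sum_jv_j\ln\frac1{v_j}$; $R_{d,H}(p,M^{[1:H]}):=-\mathrm{Ent}(p)-\sum_{h=1}^H\sum_{j=1}^d\mathrm{Ent}(M^{[h]}_{\cdot,j})$. Lazy Mirror Descent outputs $z_t:=\arg\min_{z\in\mathcal{X}}\sum_{s=1}^{t-1}\langle z,\nabla\ell_s(z_s)\rangle+\frac1\eta R_{d,H}(z)$ at step $t$, then receives $\ell_t$. *)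

theory Defs
  imports "HOL-Analysis.Analysis"
begin

text \<open>The dimension d is the
  finite index type 'd (d = CARD('d)), the horizon H is the finite index type 'h
  (H = CARD('h)). A matrix M :: real^'d^'d has entry M $ i $ j in row i, column j.\<close>

type_synonym ('d, 'h) point = "(real^'d) \<times> ((real^'d^'d)^'h)"

definition l1norm :: "real^'d::finite \<Rightarrow> real" where
  "l1norm x = (\<Sum>i\<in>UNIV. \<bar>x $ i\<bar>)"

definition col :: "real^'d::finite^'d \<Rightarrow> 'd \<Rightarrow> real^'d" where
  "col M j = (\<chi> i. M $ i $ j)"

definition prob_simplex :: "(real^'d::finite) set" where
  "prob_simplex = {x. (\<forall>i. x $ i \<ge> 0) \<and> (\<Sum>i\<in>UNIV. x $ i) = 1}"

definition scaled_simplex :: "real \<Rightarrow> (real^'d) set" where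
  "scaled_simplex a = (\<lambda>x. a *\<^sub>R x) ` prob_simplex"

definition col_stochastic :: "(real^'d::finite^'d) set" where
  "col_stochastic = {M. \<forall>j. col M j \<in> prob_simplex}"

definition scaled_stochastic :: "real \<Rightarrow> (real^'d::finite^'d) set" where
  "scaled_stochastic a = (\<lambda>M. a *\<^sub>R M) ` col_stochastic"

definition Xdom :: "real \<Rightarrow> real \<Rightarrow> ('d::finite, 'h::finite) point set" where
  "Xdom a b = (\<Union>a'\<in>{a..b}. scaled_simplex a' \<times> {Ms. \<forall>h. Ms $ h \<in> scaled_stochastic a'})"

definition normdH :: "('d::finite, 'h::finite) point \<Rightarrow> real" where
  "normdH z = sqrt ((l1norm (fst z))\<^sup>2 + (\<Sum>h\<in>UNIV. \<Sum>j\<in>UNIV. (l1norm (col (snd z $ h) j))\<^sup>2))"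

definition opnorm11 :: "real^'d^'d \<Rightarrow> real" where
  "opnorm11 M = Sup {l1norm (M *v x) | x. l1norm x = 1}"

text \<open>Ent(v) = v^c ln(1/v^c) + sum_j v_j ln(1/v_j), with v^c = 1 - sum_j v_j
  (the convention 0 ln(1/0) = 0 holds automatically since 0 * _ = 0).\<close>
definition Ent :: "real^'d::finite \<Rightarrow> real" where
  "Ent v = (let vc = 1 - (\<Sum>j\<in>UNIV. v $ j) in
            vc * ln (1 / vc) + (\<Sum>j\<in>UNIV. v $ j * ln (1 / v $ j)))"

definition Rreg :: "('d::finite, 'h::finite) point \<Rightarrow> real" where
  "Rreg z = - Ent (fst z) - (\<Sum>h\<in>UNIV. \<Sum>j\<in>UNIV. Ent (col (snd z $ h) j))"

text \<open>Lazy Mirror Descent: z_t minimizes over X the function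
  z \<mapsto> sum_{s<t} <z, g_s> + (1/eta) R(z), where g_s is the (sub)gradient of l_s at z_s.\<close>
definition lazy_md_iterate ::
  "('d::finite, 'h::finite) point set \<Rightarrow> real \<Rightarrow> (nat \<Rightarrow> ('d, 'h) point) \<Rightarrow> nat \<Rightarrow> ('d::finite, 'h::finite) point \<Rightarrow> bool" where
  "lazy_md_iterate X \<eta> g t z \<longleftrightarrow> z \<in> X \<and>
     (\<forall>y\<in>X. (\<Sum>s\<in>{1..<t}. inner z (g s)) + (1 / \<eta>) * Rreg z
            \<le> (\<Sum>s\<in>{1..<t}. inner y (g s)) + (1 / \<eta>) * Rreg y)"

end

theory Submission
  imports Defs "HOL-Real_Asymp.Real_Asymp"
begin

(* Lazy mirror descent is follow-the-regularized-leader on the linearised losses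
   <g_t, z>. The regularizer R_{d,H} is a sum of negative entropies of the probability
   vectors (1 - sum v, v) formed by p and by the columns of the M^[h]; each of them is
   1-strongly convex with respect to the l1 norm (differentiate twice along a segment and
   apply Cauchy-Schwarz), so R_{d,H} is 1-strongly convex with respect to ||.||_{d,H}, and
   its range on X is at most (1 + dH) ln (d + 1) <= 4 dH ln d.
   Strong convexity lets every leader beat any other point by ||z - y||^2 / (2 eta); this
   gives the stability bound ||z_t - z_{t+1}|| <= eta L, and together with the
   be-the-leader telescoping the regret bound range / eta + eta L^2 T, which the chosen
   eta balances. *)

section \<open>Strong convexity and follow-the-regularized-leader\<close>

definition strongly_convex_on :: "'a::real_vector set \<Rightarrow> ('a \<Rightarrow> real) \<Rightarrow> ('a \<Rightarrow> real) \<Rightarrow> bool" where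
  "strongly_convex_on S N f \<longleftrightarrow> (\<forall>x\<in>S. \<forall>y\<in>S. \<forall>t\<in>{0..1}.
     f ((1 - t) *\<^sub>R x + t *\<^sub>R y) \<le> (1 - t) * f x + t * f y - t * (1 - t) / 2 * (N (x - y))\<^sup>2)"

lemma strongly_convex_onD:
  fixes t :: real
  assumes "strongly_convex_on S N f" "x \<in> S" "y \<in> S" "0 \<le> t" "t \<le> 1"
  shows "f ((1 - t) *\<^sub>R x + t *\<^sub>R y) \<le> (1 - t) * f x + t * f y - t * (1 - t) / 2 * (N (x - y))\<^sup>2"
  using assms by (simp add: strongly_convex_on_def)

lemma strongly_convex_on_add_inner:
  assumes "strongly_convex_on S N f"
  shows "strongly_convex_on S N (\<lambda>x. inner x c + f x)"
  unfolding strongly_convex_on_def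
proof (intro ballI)
  fix x y and t :: real assume "x \<in> S" "y \<in> S" "t \<in> {0..1}"
  then have "f ((1 - t) *\<^sub>R x + t *\<^sub>R y) \<le> (1 - t) * f x + t * f y - t * (1 - t) / 2 * (N (x - y))\<^sup>2"
    using assms by (intro strongly_convex_onD) auto
  moreover have "inner ((1 - t) *\<^sub>R x + t *\<^sub>R y) c = (1 - t) * inner x c + t * inner y c"
    by (simp add: inner_add_left)
  ultimately show "inner ((1 - t) *\<^sub>R x + t *\<^sub>R y) c + f ((1 - t) *\<^sub>R x + t *\<^sub>R y)
      \<le> (1 - t) * (inner x c + f x) + t * (inner y c + f y) - t * (1 - t) / 2 * (N (x - y))\<^sup>2"
    by (simp add: distrib_left)
qed

lemma strongly_convex_on_min_quadratic_growth:
  assumes S: "convex S" "strongly_convex_on S N f" and xy: "x \<in> S" "y \<in> S"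
    and min: "\<And>w. w \<in> S \<Longrightarrow> f x \<le> f w"
  shows "f x + (N (x - y))\<^sup>2 / 2 \<le> f y"
proof -
  have "s * ((N (x - y))\<^sup>2 / 2) \<le> f y - f x" if s: "0 < s" "s < 1" for s
  proof -
    have "f x \<le> f ((1 - (1 - s)) *\<^sub>R x + (1 - s) *\<^sub>R y)"
      using S xy s by (intro min convexD) auto
    also have "\<dots> \<le> s * f x + (1 - s) * f y - (1 - s) * s / 2 * (N (x - y))\<^sup>2"
      using strongly_convex_onD[OF S(2) xy, of "1 - s"] s by simp
    finally have "(1 - s) * (s * ((N (x - y))\<^sup>2 / 2)) \<le> (1 - s) * (f y - f x)"
      by (simp add: algebra_simps)
    then show ?thesis
      using s by simp
  qed
  then have "(N (x - y))\<^sup>2 / 2 \<le> f y - f x"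
    by (rule field_le_mult_one_interval)
  then show ?thesis
    by simp
qed

definition ftrl_objective :: "('a::real_inner \<Rightarrow> real) \<Rightarrow> real \<Rightarrow> (nat \<Rightarrow> 'a) \<Rightarrow> nat \<Rightarrow> 'a \<Rightarrow> real" where
  "ftrl_objective R \<eta> g t y = (\<Sum>s\<in>{1..<t}. inner y (g s)) + R y / \<eta>"

definition is_ftrl_leader :: "'a::real_inner set \<Rightarrow> ('a \<Rightarrow> real) \<Rightarrow> real \<Rightarrow> (nat \<Rightarrow> 'a) \<Rightarrow> nat \<Rightarrow> 'a \<Rightarrow> bool" where
  "is_ftrl_leader X R \<eta> g t z \<longleftrightarrow>
     z \<in> X \<and> (\<forall>y\<in>X. ftrl_objective R \<eta> g t z \<le> ftrl_objective R \<eta> g t y)"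

lemma ftrl_objective_Suc:
  "1 \<le> t \<Longrightarrow> ftrl_objective R \<eta> g (Suc t) y = ftrl_objective R \<eta> g t y + inner y (g t)"
  by (simp add: ftrl_objective_def sum.atLeastLessThan_Suc)

locale lazy_mirror_descent =
  fixes X :: "'a::real_inner set" and R N :: "'a \<Rightarrow> real" and \<eta> L :: real and T :: nat
    and g z :: "nat \<Rightarrow> 'a"
  assumes convex_X: "convex X"
    and strongly_convex_R: "strongly_convex_on X N R"
    and N_uminus: "\<And>w. N (- w) = N w"
    and eta_pos: "0 < \<eta>"
    and L_nonneg: "0 \<le> L"
    and leader: "\<And>t. t \<in> {1..T} \<Longrightarrow> is_ftrl_leader X R \<eta> g t (z t)"
    and dual_bound: "\<And>t w. t \<in> {1..T} \<Longrightarrow> inner (g t) w \<le> L * N w"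
begin

abbreviation F :: "nat \<Rightarrow> 'a \<Rightarrow> real" where
  "F \<equiv> ftrl_objective R \<eta> g"

lemma leader_in_X: "t \<in> {1..T} \<Longrightarrow> z t \<in> X"
  using leader by (simp add: is_ftrl_leader_def)

lemma leader_min: "t \<in> {1..T} \<Longrightarrow> y \<in> X \<Longrightarrow> F t (z t) \<le> F t y"
  using leader by (simp add: is_ftrl_leader_def)

lemma leader_quadratic_growth:
  assumes t: "t \<in> {1..T}" and y: "y \<in> X"
  shows "F t (z t) + (N (z t - y))\<^sup>2 / (2 * \<eta>) \<le> F t y"
proof -
  define c where "c = \<eta> *\<^sub>R (\<Sum>s\<in>{1..<t}. g s)"
  have scaled: "\<eta> * F t w = inner w c + R w" for w
    using eta_pos by (simp add: c_def ftrl_objective_def inner_sum_right distrib_left)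
  have "inner (z t) c + R (z t) + (N (z t - y))\<^sup>2 / 2 \<le> inner y c + R y"
  proof (rule strongly_convex_on_min_quadratic_growth[OF convex_X])
    show "strongly_convex_on X N (\<lambda>w. inner w c + R w)"
      using strongly_convex_R by (rule strongly_convex_on_add_inner)
    show "inner (z t) c + R (z t) \<le> inner w c + R w" if "w \<in> X" for w
      using leader_min[OF t that] eta_pos by (simp flip: scaled)
  qed (use leader_in_X[OF t] y in auto)
  then have "\<eta> * F t (z t) + (N (z t - y))\<^sup>2 / 2 \<le> \<eta> * F t y"
    by (simp add: scaled)
  then show ?thesis
    using eta_pos by (simp add: field_simps)
qed

lemma stability:
  assumes t: "t \<in> {1..<T}"
  shows "N (z t - z (Suc t)) \<le> \<eta> * L"
proof -
  have t': "t \<in> {1..T}" "Suc t \<in> {1..T}" and "1 \<le> t"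
    using t by auto
  define n where "n = N (z t - z (Suc t))"
  have "N (z (Suc t) - z t) = n"
    using N_uminus[of "z t - z (Suc t)"] by (simp add: n_def)
  then have "F t (z t) + n\<^sup>2 / (2 * \<eta>) \<le> F t (z (Suc t))"
    and "F (Suc t) (z (Suc t)) + n\<^sup>2 / (2 * \<eta>) \<le> F (Suc t) (z t)"
    using leader_quadratic_growth[OF t'(1) leader_in_X[OF t'(2)]]
      leader_quadratic_growth[OF t'(2) leader_in_X[OF t'(1)]] by (simp_all add: n_def)
  then have "n\<^sup>2 / \<eta> \<le> inner (g t) (z t - z (Suc t))"
    using \<open>1 \<le> t\<close> by (simp add: ftrl_objective_Suc inner_diff_right inner_commute)
  also have "\<dots> \<le> L * n"
    using dual_bound[OF t'(1)] by (simp add: n_def)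
  finally have "n * n \<le> n * (\<eta> * L)"
    using eta_pos by (simp add: field_simps power2_eq_square)
  moreover have "0 \<le> \<eta> * L"
    using eta_pos L_nonneg by simp
  ultimately show ?thesis
    unfolding n_def[symmetric] by (cases "0 < n") (auto simp: mult_le_cancel_left_pos)
qed

lemma be_the_leader:
  "n \<in> {1..T} \<Longrightarrow> (\<Sum>t\<in>{1..<n}. inner (z (Suc t)) (g t)) + R (z 1) / \<eta> \<le> F n (z n)"
proof (induction n)
  case (Suc n)
  show ?case
  proof (cases "n = 0")
    case False
    then have n: "n \<in> {1..T}" "1 \<le> n"
      using Suc.prems by auto
    have "(\<Sum>t\<in>{1..<Suc n}. inner (z (Suc t)) (g t)) + R (z 1) / \<eta>
        = (\<Sum>t\<in>{1..<n}. inner (z (Suc t)) (g t)) + R (z 1) / \<eta> + inner (z (Suc n)) (g n)"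
      using n by (simp add: sum.atLeastLessThan_Suc)
    also have "\<dots> \<le> F n (z n) + inner (z (Suc n)) (g n)"
      using Suc.IH[OF n(1)] by simp
    also have "\<dots> \<le> F n (z (Suc n)) + inner (z (Suc n)) (g n)"
      using leader_min[OF n(1) leader_in_X[OF Suc.prems]] by simp
    also have "\<dots> = F (Suc n) (z (Suc n))"
      using n by (simp add: ftrl_objective_Suc)
    finally show ?thesis .
  qed (simp add: ftrl_objective_def)
qed simp

lemma drift_le: "(\<Sum>t\<in>{1..<T}. inner (g t) (z t - z (Suc t))) \<le> (T - 1) * (\<eta> * L\<^sup>2)"
proof -
  have "inner (g t) (z t - z (Suc t)) \<le> \<eta> * L\<^sup>2" if t: "t \<in> {1..<T}" for t
  proof -
    have "inner (g t) (z t - z (Suc t)) \<le> L * N (z t - z (Suc t))"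
      using t by (intro dual_bound) auto
    also have "\<dots> \<le> L * (\<eta> * L)"
      using stability[OF t] L_nonneg by (rule mult_left_mono)
    finally show ?thesis
      by (simp add: power2_eq_square mult_ac)
  qed
  then show ?thesis
    using sum_bounded_above[of "{1..<T}" "\<lambda>t. inner (g t) (z t - z (Suc t))"] by simp
qed

lemma leader_regret_le:
  assumes "1 \<le> T" and y: "y \<in> X"
  shows "(\<Sum>t\<in>{1..<T}. inner (z (Suc t)) (g t)) - (\<Sum>t\<in>{1..<T}. inner y (g t)) + inner (g T) (z T - y)
    \<le> (R y - R (z 1)) / \<eta> + \<eta> * L\<^sup>2 / 2"
proof -
  from assms(1) have T: "T \<in> {1..T}"
    by simp
  define n where "n = N (z T - y)"
  have "(\<Sum>t\<in>{1..<T}. inner (z (Suc t)) (g t)) + R (z 1) / \<eta> + n\<^sup>2 / (2 * \<eta>) \<le> F T y"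
    using be_the_leader[OF T] leader_quadratic_growth[OF T y] by (simp add: n_def)
  moreover have "inner (g T) (z T - y) \<le> L * n"
    using dual_bound[OF T] by (simp add: n_def)
  moreover have "L * n - n\<^sup>2 / (2 * \<eta>) \<le> \<eta> * L\<^sup>2 / 2"
  proof -
    have "0 \<le> (n - \<eta> * L)\<^sup>2 / (2 * \<eta>)"
      using eta_pos by simp
    then show ?thesis
      using eta_pos by (simp add: power2_eq_square field_simps)
  qed
  ultimately show ?thesis
    unfolding ftrl_objective_def diff_divide_distrib by linarith
qed

lemma linear_regret:
  assumes T: "1 \<le> T" and y: "y \<in> X" and D: "R y - R (z 1) \<le> D"
  shows "(\<Sum>t\<in>{1..T}. inner (g t) (z t - y)) \<le> D / \<eta> + \<eta> * L\<^sup>2 * T"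
proof -
  have "{1..T} = insert T {1..<T}"
    using T by auto
  then have "(\<Sum>t\<in>{1..T}. inner (g t) (z t - y))
      = (\<Sum>t\<in>{1..<T}. inner (g t) (z t - z (Suc t)) + (inner (z (Suc t)) (g t) - inner y (g t)))
        + inner (g T) (z T - y)"
    by (simp add: inner_diff_right inner_commute)
  also have "\<dots> = (\<Sum>t\<in>{1..<T}. inner (g t) (z t - z (Suc t)))
        + ((\<Sum>t\<in>{1..<T}. inner (z (Suc t)) (g t)) - (\<Sum>t\<in>{1..<T}. inner y (g t))
        + inner (g T) (z T - y))"
    by (simp add: sum.distrib sum_subtractf)
  also have "\<dots> \<le> (T - 1) * (\<eta> * L\<^sup>2) + ((R y - R (z 1)) / \<eta> + \<eta> * L\<^sup>2 / 2)"
    using T y by (intro add_mono drift_le leader_regret_le) auto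
  also have "\<dots> \<le> D / \<eta> + \<eta> * L\<^sup>2 * T"
  proof -
    have "(R y - R (z 1)) / \<eta> \<le> D / \<eta>"
      using D eta_pos by (simp add: divide_right_mono)
    moreover have "real (T - 1) * (\<eta> * L\<^sup>2) = \<eta> * L\<^sup>2 * T - \<eta> * L\<^sup>2"
      using T by (simp add: of_nat_diff algebra_simps)
    moreover have "0 \<le> \<eta> * L\<^sup>2"
      using eta_pos by simp
    ultimately show ?thesis
      by linarith
  qed
  finally show ?thesis .
qed

lemma convex_regret:
  assumes T: "1 \<le> T" and y: "y \<in> X" and D: "R y - R (z 1) \<le> D"
    and subgrad: "\<And>t. t \<in> {1..T} \<Longrightarrow> f t (z t) + inner (g t) (y - z t) \<le> f t y"
  shows "(\<Sum>t\<in>{1..T}. f t (z t)) - (\<Sum>t\<in>{1..T}. f t y) \<le> D / \<eta> + \<eta> * L\<^sup>2 * T"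
proof -
  have "(\<Sum>t\<in>{1..T}. f t (z t)) - (\<Sum>t\<in>{1..T}. f t y) \<le> (\<Sum>t\<in>{1..T}. inner (g t) (z t - y))"
    unfolding sum_subtractf[symmetric]
  proof (rule sum_mono)
    fix t assume "t \<in> {1..T}"
    from subgrad[OF this] show "f t (z t) - f t y \<le> inner (g t) (z t - y)"
      by (simp add: inner_diff_right)
  qed
  also have "\<dots> \<le> D / \<eta> + \<eta> * L\<^sup>2 * T"
    using T y D by (rule linear_regret)
  finally show ?thesis .
qed

end

section \<open>Strong convexity of the negative entropy\<close>

lemma continuous_on_xlnx: "continuous_on {0..} (\<lambda>x::real. x * ln x)"
proof -
  have "continuous (at x within {0..}) (\<lambda>x::real. x * ln x)" if "0 \<le> x" for x
  proof (cases "x = 0")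
    case True
    have "((\<lambda>x::real. x * ln x) \<longlongrightarrow> 0) (at_right 0)"
      by real_asymp
    with True show ?thesis
      by (simp add: continuous_within at_within_Ici_at_right)
  next
    case False
    with that have "isCont (\<lambda>x::real. x * ln x) x"
      by (auto intro!: continuous_intros)
    then show ?thesis
      by (rule continuous_at_imp_continuous_within)
  qed
  then show ?thesis
    by (simp add: continuous_on_eq_continuous_within)
qed

lemma MVT_real_derivative:
  fixes f f' :: "real \<Rightarrow> real"
  assumes "p < q" "continuous_on {p..q} f"
    and "\<And>x. p < x \<Longrightarrow> x < q \<Longrightarrow> (f has_real_derivative f' x) (at x)"
  shows "\<exists>\<xi>. p < \<xi> \<and> \<xi> < q \<and> f q - f p = (q - p) * f' \<xi>"
  using mvt[OF assms(1,2), of "\<lambda>x. (*) (f' x)"] assms(3)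
  by (metis has_field_derivative_def mult.commute)

lemma convex_on_Icc_if_deriv2_nonneg:
  fixes f f' f'' :: "real \<Rightarrow> real"
  assumes cont: "continuous_on {a..b} f"
    and f': "\<And>x. a < x \<Longrightarrow> x < b \<Longrightarrow> (f has_real_derivative f' x) (at x)"
    and f'': "\<And>x. a < x \<Longrightarrow> x < b \<Longrightarrow> (f' has_real_derivative f'' x) (at x)"
    and nonneg: "\<And>x. a < x \<Longrightarrow> x < b \<Longrightarrow> 0 \<le> f'' x"
  shows "convex_on {a..b} f"
proof (rule convex_on_linorderI)
  fix t x y :: real
  assume t: "0 < t" "t < 1" and xy: "x \<in> {a..b}" "y \<in> {a..b}" "x < y"
  define m where "m = (1 - t) * x + t * y"
  have m_diff: "m - x = t * (y - x)" "y - m = (1 - t) * (y - x)"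
    by (simp_all add: m_def algebra_simps)
  have m: "x < m" "m < y"
    using m_diff t xy(3) by (metis diff_gt_0_iff_gt mult_pos_pos)+
  have cont': "continuous_on {p..q} f" if "a \<le> p" "q \<le> b" for p q
    using cont by (rule continuous_on_subset) (use that in auto)
  have "\<exists>\<xi>. x < \<xi> \<and> \<xi> < m \<and> f m - f x = (m - x) * f' \<xi>"
    using xy m by (intro MVT_real_derivative cont' f') auto
  then obtain \<xi>\<^sub>1 where \<xi>\<^sub>1: "x < \<xi>\<^sub>1" "\<xi>\<^sub>1 < m" "f m - f x = (m - x) * f' \<xi>\<^sub>1"
    by blast
  have "\<exists>\<xi>. m < \<xi> \<and> \<xi> < y \<and> f y - f m = (y - m) * f' \<xi>"
    using xy m by (intro MVT_real_derivative cont' f') auto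
  then obtain \<xi>\<^sub>2 where \<xi>\<^sub>2: "m < \<xi>\<^sub>2" "\<xi>\<^sub>2 < y" "f y - f m = (y - m) * f' \<xi>\<^sub>2"
    by blast
  have "\<exists>\<zeta>. \<xi>\<^sub>1 < \<zeta> \<and> \<zeta> < \<xi>\<^sub>2 \<and> f' \<xi>\<^sub>2 - f' \<xi>\<^sub>1 = (\<xi>\<^sub>2 - \<xi>\<^sub>1) * f'' \<zeta>"
    using xy m \<xi>\<^sub>1 \<xi>\<^sub>2
    by (intro MVT_real_derivative has_real_derivative_imp_continuous_on[where f'=f''] f'') auto
  then obtain \<zeta> where "\<xi>\<^sub>1 < \<zeta>" "\<zeta> < \<xi>\<^sub>2" "f' \<xi>\<^sub>2 - f' \<xi>\<^sub>1 = (\<xi>\<^sub>2 - \<xi>\<^sub>1) * f'' \<zeta>"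
    by blast
  moreover have "0 \<le> f'' \<zeta>"
    using nonneg calculation xy m \<xi>\<^sub>1 \<xi>\<^sub>2 by simp
  ultimately have mono: "f' \<xi>\<^sub>1 \<le> f' \<xi>\<^sub>2"
    by (smt (verit) mult_nonneg_nonneg)
  have "(1 - t) * (f m - f x) = t * (1 - t) * (y - x) * f' \<xi>\<^sub>1"
    by (simp add: \<xi>\<^sub>1(3) m_diff mult_ac)
  also have "\<dots> \<le> t * (1 - t) * (y - x) * f' \<xi>\<^sub>2"
    by (rule mult_left_mono[OF mono]) (use t xy in simp)
  also have "\<dots> = t * (f y - f m)"
    by (simp add: \<xi>\<^sub>2(3) m_diff mult_ac)
  finally have "(1 - t) * (f m - f x) \<le> t * (f y - f m)" .
  moreover have "(1 - t) *\<^sub>R x + t *\<^sub>R y = m"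
    by (simp add: m_def)
  ultimately show "f ((1 - t) *\<^sub>R x + t *\<^sub>R y) \<le> (1 - t) * f x + t * f y"
    by (simp add: algebra_simps)
qed simp

lemma square_sum_abs_le_sum_power2_divide:
  fixes d x :: "'i \<Rightarrow> real"
  assumes pos: "\<And>i. i \<in> I \<Longrightarrow> 0 < x i" and sum_le: "sum x I \<le> 1"
  shows "(\<Sum>i\<in>I. \<bar>d i\<bar>)\<^sup>2 \<le> (\<Sum>i\<in>I. (d i)\<^sup>2 / x i)"
proof -
  define D where "D = (\<Sum>i\<in>I. \<bar>d i\<bar>)"
  have "2 * D * \<bar>d i\<bar> - D\<^sup>2 * x i \<le> (d i)\<^sup>2 / x i" if "i \<in> I" for i
  proof -
    have "0 \<le> (\<bar>d i\<bar> - D * x i)\<^sup>2"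
      by simp
    then have "(2 * D * \<bar>d i\<bar> - D\<^sup>2 * x i) * x i \<le> (d i)\<^sup>2"
      by (simp add: power2_eq_square algebra_simps)
    with pos[OF that] show ?thesis
      by (simp add: pos_le_divide_eq)
  qed
  then have "(\<Sum>i\<in>I. 2 * D * \<bar>d i\<bar> - D\<^sup>2 * x i) \<le> (\<Sum>i\<in>I. (d i)\<^sup>2 / x i)"
    by (rule sum_mono)
  moreover have "(\<Sum>i\<in>I. 2 * D * \<bar>d i\<bar> - D\<^sup>2 * x i) = 2 * D * D - D\<^sup>2 * sum x I"
    by (simp add: sum_subtractf sum_distrib_left D_def)
  moreover have "D\<^sup>2 * sum x I \<le> D\<^sup>2"
    using sum_le by (simp add: mult_left_le)
  ultimately show ?thesis
    unfolding D_def[symmetric] by (simp add: power2_eq_square)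
qed

lemma xlnx_segment_derivatives:
  fixes p q s :: real
  defines "x \<equiv> \<lambda>s. (1 - s) * p + s * q"
  assumes pos: "0 < x s"
  shows "((\<lambda>s. x s * ln (x s)) has_real_derivative (q - p) * (ln (x s) + 1)) (at s)"
    and "((\<lambda>s. (q - p) * (ln (x s) + 1)) has_real_derivative (q - p)\<^sup>2 / x s) (at s)"
proof -
  have x: "(x has_real_derivative q - p) (at s)"
    unfolding x_def by (auto intro!: derivative_eq_intros simp: algebra_simps)
  have "((\<lambda>y. y * ln y) has_real_derivative ln (x s) + 1) (at (x s))"
    using pos by (auto intro!: derivative_eq_intros)
  from DERIV_chain2[OF this x]
  show "((\<lambda>s. x s * ln (x s)) has_real_derivative (q - p) * (ln (x s) + 1)) (at s)"
    by (simp add: mult.commute)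
  have "((\<lambda>y. ln y + 1) has_real_derivative 1 / x s) (at (x s))"
    using pos by (auto intro!: derivative_eq_intros)
  from DERIV_cmult[OF DERIV_chain2[OF this x], of "q - p"]
  show "((\<lambda>s. (q - p) * (ln (x s) + 1)) has_real_derivative (q - p)\<^sup>2 / x s) (at s)"
    by (simp add: power2_eq_square)
qed

(* Requiring u i ~= v i keeps the segment strictly positive on the open interval, where the
   second derivative of the sum is sum_i (v i - u i)^2 / x i >= (sum_i |u i - v i|)^2. *)
lemma convex_on_sum_xlnx_segment:
  fixes u v :: "'i \<Rightarrow> real"
  assumes u: "\<And>i. i \<in> I \<Longrightarrow> 0 \<le> u i" "sum u I \<le> 1"
    and v: "\<And>i. i \<in> I \<Longrightarrow> 0 \<le> v i" "sum v I \<le> 1"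
    and ne: "\<And>i. i \<in> I \<Longrightarrow> u i \<noteq> v i"
  defines "x \<equiv> \<lambda>s i. (1 - s) * u i + s * v i"
  shows "convex_on {0..1} (\<lambda>s. (\<Sum>i\<in>I. x s i * ln (x s i)) - (\<Sum>i\<in>I. \<bar>u i - v i\<bar>)\<^sup>2 / 2 * s\<^sup>2)"
proof (rule convex_on_Icc_if_deriv2_nonneg)
  define D where "D = (\<Sum>i\<in>I. \<bar>u i - v i\<bar>)"
  have x_pos: "0 < x s i" if "0 < s" "s < 1" "i \<in> I" for s i
  proof -
    have "0 < u i \<or> 0 < v i"
      using u v ne that by force
    with that u v show ?thesis
      unfolding x_def by (smt (verit) mult_nonneg_nonneg mult_pos_pos)
  qed
  have cont: "continuous_on {0..1} (\<lambda>s. x s i * ln (x s i))" if "i \<in> I" for i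
  proof (rule continuous_on_compose2[OF continuous_on_xlnx])
    show "continuous_on {0..1} (\<lambda>s. x s i)"
      unfolding x_def by (intro continuous_intros)
    show "(\<lambda>s. x s i) ` {0..1} \<subseteq> {0..}"
      using that u v by (auto simp: x_def)
  qed
  have "continuous_on {0..1} (\<lambda>s. D\<^sup>2 / 2 * s\<^sup>2)"
    by (intro continuous_intros)
  with cont show "continuous_on {0..1} (\<lambda>s. (\<Sum>i\<in>I. x s i * ln (x s i)) - D\<^sup>2 / 2 * s\<^sup>2)"
    by (intro continuous_on_diff continuous_on_sum)
  fix s :: real assume s: "0 < s" "s < 1"
  have deriv: "((\<lambda>s. x s i * ln (x s i)) has_real_derivative (v i - u i) * (ln (x s i) + 1)) (at s)"
    "((\<lambda>s. (v i - u i) * (ln (x s i) + 1)) has_real_derivative (v i - u i)\<^sup>2 / x s i) (at s)"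
    if "i \<in> I" for i
    using xlnx_segment_derivatives[where p = "u i" and q = "v i"] x_pos[OF s that]
    by (simp_all add: x_def)
  show "((\<lambda>s. (\<Sum>i\<in>I. x s i * ln (x s i)) - D\<^sup>2 / 2 * s\<^sup>2) has_real_derivative
          (\<Sum>i\<in>I. (v i - u i) * (ln (x s i) + 1)) - D\<^sup>2 * s) (at s)"
    by (intro DERIV_diff DERIV_sum deriv) (auto intro!: derivative_eq_intros)
  show "((\<lambda>s. (\<Sum>i\<in>I. (v i - u i) * (ln (x s i) + 1)) - D\<^sup>2 * s) has_real_derivative
          (\<Sum>i\<in>I. (v i - u i)\<^sup>2 / x s i) - D\<^sup>2) (at s)"
    by (intro DERIV_diff DERIV_sum deriv) (auto intro!: derivative_eq_intros)
  have "sum (x s) I = (1 - s) * sum u I + s * sum v I"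
    by (simp add: x_def sum.distrib sum_distrib_left)
  also have "\<dots> \<le> (1 - s) * 1 + s * 1"
    using s u v by (intro add_mono mult_left_mono) auto
  finally have "D\<^sup>2 \<le> (\<Sum>i\<in>I. (v i - u i)\<^sup>2 / x s i)"
    unfolding D_def using x_pos[OF s]
    by (subst sum.cong[OF refl abs_minus_commute]) (intro square_sum_abs_le_sum_power2_divide, auto)
  then show "0 \<le> (\<Sum>i\<in>I. (v i - u i)\<^sup>2 / x s i) - D\<^sup>2"
    by simp
qed

lemma sum_xlnx_strongly_convex_distinct:
  fixes u v :: "'i \<Rightarrow> real"
  assumes u: "\<And>i. i \<in> I \<Longrightarrow> 0 \<le> u i" "sum u I \<le> 1"
    and v: "\<And>i. i \<in> I \<Longrightarrow> 0 \<le> v i" "sum v I \<le> 1"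
    and ne: "\<And>i. i \<in> I \<Longrightarrow> u i \<noteq> v i"
    and t: "0 \<le> t" "t \<le> 1"
  defines "w \<equiv> \<lambda>i. (1 - t) * u i + t * v i"
  shows "(\<Sum>i\<in>I. w i * ln (w i)) \<le> (1 - t) * (\<Sum>i\<in>I. u i * ln (u i)) + t * (\<Sum>i\<in>I. v i * ln (v i))
           - t * (1 - t) / 2 * (\<Sum>i\<in>I. \<bar>u i - v i\<bar>)\<^sup>2"
  using convex_onD[OF convex_on_sum_xlnx_segment[OF u v ne], of t 0 1] t
  by (simp add: w_def field_simps power2_eq_square)

lemma sum_xlnx_strongly_convex:
  fixes u v :: "'i \<Rightarrow> real"
  assumes fin: "finite I"
    and u: "\<And>i. i \<in> I \<Longrightarrow> 0 \<le> u i" "sum u I \<le> 1"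
    and v: "\<And>i. i \<in> I \<Longrightarrow> 0 \<le> v i" "sum v I \<le> 1"
    and t: "0 \<le> t" "t \<le> 1"
  defines "w \<equiv> \<lambda>i. (1 - t) * u i + t * v i"
  shows "(\<Sum>i\<in>I. w i * ln (w i)) \<le> (1 - t) * (\<Sum>i\<in>I. u i * ln (u i)) + t * (\<Sum>i\<in>I. v i * ln (v i))
           - t * (1 - t) / 2 * (\<Sum>i\<in>I. \<bar>u i - v i\<bar>)\<^sup>2"
proof -
  define J where "J = {i\<in>I. u i \<noteq> v i}"
  have J: "J \<subseteq> I" "finite J"
    using fin by (auto simp: J_def)
  have split: "sum f I = sum f J + sum f (I - J)" for f :: "'i \<Rightarrow> real"
    using sum.subset_diff[OF J(1) fin] by (simp add: add.commute)
  have eq: "u i = v i" "w i = v i" if "i \<in> I - J" for i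
    using that by (auto simp: J_def w_def algebra_simps)
  have "sum u J \<le> sum u I" "sum v J \<le> sum v I"
    using u v J by (auto intro: sum_mono2[OF fin])
  then have "(\<Sum>i\<in>J. w i * ln (w i)) \<le> (1 - t) * (\<Sum>i\<in>J. u i * ln (u i)) + t * (\<Sum>i\<in>J. v i * ln (v i))
           - t * (1 - t) / 2 * (\<Sum>i\<in>J. \<bar>u i - v i\<bar>)\<^sup>2"
    unfolding w_def using u v t J by (intro sum_xlnx_strongly_convex_distinct) (auto simp: J_def)
  moreover have "(\<Sum>i\<in>I - J. w i * ln (w i))
      = (1 - t) * (\<Sum>i\<in>I - J. u i * ln (u i)) + t * (\<Sum>i\<in>I - J. v i * ln (v i))"
    by (simp add: eq algebra_simps)
  moreover have "(\<Sum>i\<in>I - J. \<bar>u i - v i\<bar>) = 0"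
    by (simp add: eq)
  ultimately show ?thesis
    unfolding split[of "\<lambda>i. w i * ln (w i)"] split[of "\<lambda>i. u i * ln (u i)"]
      split[of "\<lambda>i. v i * ln (v i)"] split[of "\<lambda>i. \<bar>u i - v i\<bar>"]
    by (simp add: algebra_simps)
qed

lemma sum_xlnx_ge_neg_ln_card:
  fixes x :: "'i \<Rightarrow> real"
  assumes fin: "finite I" and nonneg: "\<And>i. i \<in> I \<Longrightarrow> 0 \<le> x i" and sum: "sum x I = 1"
  shows "- ln (card I) \<le> (\<Sum>i\<in>I. x i * ln (x i))"
proof -
  define n where "n = real (card I)"
  have n: "0 < n"
    using fin sum by (auto simp: n_def card_gt_0_iff)
  have "- x i * ln (x i) - x i * ln n \<le> 1 / n - x i" if "i \<in> I" for i
  proof (cases "x i = 0")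
    case False
    then have pos: "0 < x i"
      using nonneg[OF that] by simp
    have "- x i * ln (x i) - x i * ln n = x i * ln (1 / (n * x i))"
      using pos n by (simp add: ln_div ln_mult algebra_simps)
    also have "\<dots> \<le> x i * (1 / (n * x i) - 1)"
      using pos n by (intro mult_left_mono ln_le_minus_one) auto
    also have "\<dots> = 1 / n - x i"
      using pos n by (simp add: field_simps)
    finally show ?thesis .
  qed (use n in simp)
  then have "(\<Sum>i\<in>I. - x i * ln (x i) - x i * ln n) \<le> (\<Sum>i\<in>I. 1 / n - x i)"
    by (rule sum_mono)
  then show ?thesis
    using sum n by (simp add: sum_subtractf sum_negf n_def flip: sum_distrib_right)
qed

definition sub_simplex :: "(real^'d::finite) set" where
  "sub_simplex = {v. (\<forall>j. 0 \<le> v $ j) \<and> (\<Sum>j\<in>UNIV. v $ j) \<le> 1}"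

text \<open>The probability vector (1 - sum v, v) on the index type 'd option, whose Shannon entropy is Ent v.\<close>
definition augment :: "real^'d::finite \<Rightarrow> 'd option \<Rightarrow> real" where
  "augment v k = (case k of None \<Rightarrow> 1 - (\<Sum>j\<in>UNIV. v $ j) | Some j \<Rightarrow> v $ j)"

lemma sum_UNIV_option:
  fixes f :: "'a::finite option \<Rightarrow> 'b::comm_monoid_add"
  shows "(\<Sum>k\<in>UNIV. f k) = f None + (\<Sum>j\<in>UNIV. f (Some j))"
proof -
  have "sum f (insert None (range Some)) = f None + sum f (range Some)"
    by (subst sum.insert) auto
  then show ?thesis
    by (simp add: UNIV_option_conv sum.reindex)
qed

lemma sum_augment: "(\<Sum>k\<in>UNIV. augment v k) = 1"
  by (simp add: sum_UNIV_option augment_def)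

lemma Ent_augment: "Ent v = - (\<Sum>k\<in>UNIV. augment v k * ln (augment v k))"
  by (simp add: sum_UNIV_option augment_def Ent_def Let_def sum_negf
      ln_inverse[unfolded inverse_eq_divide])

lemma augment_nonneg: "v \<in> sub_simplex \<Longrightarrow> 0 \<le> augment v k"
  by (cases k) (auto simp: augment_def sub_simplex_def)

lemma augment_convex_comb:
  "augment ((1 - t) *\<^sub>R v + t *\<^sub>R w) k = (1 - t) * augment v k + t * augment w k"
proof (cases k)
  case None
  have "(\<Sum>j\<in>UNIV. ((1 - t) *\<^sub>R v + t *\<^sub>R w) $ j) = (1 - t) * sum (($) v) UNIV + t * sum (($) w) UNIV"
    by (simp add: sum.distrib sum_distrib_left)
  with None show ?thesis
    by (simp add: augment_def algebra_simps)
qed (simp add: augment_def)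

lemma l1norm_diff_le_augment: "l1norm (v - w) \<le> (\<Sum>k\<in>UNIV. \<bar>augment v k - augment w k\<bar>)"
  by (simp add: sum_UNIV_option augment_def l1norm_def)

lemma neg_Ent_strongly_convex: "strongly_convex_on sub_simplex l1norm (\<lambda>v. - Ent v)"
  unfolding strongly_convex_on_def
proof (intro ballI)
  fix v w :: "real^'d" and t :: real
  assume v: "v \<in> sub_simplex" and w: "w \<in> sub_simplex" and t: "t \<in> {0..1}"
  define A where "A = (\<Sum>k\<in>UNIV. \<bar>augment v k - augment w k\<bar>)"
  have "(\<Sum>k\<in>UNIV. augment ((1 - t) *\<^sub>R v + t *\<^sub>R w) k * ln (augment ((1 - t) *\<^sub>R v + t *\<^sub>R w) k))
      \<le> (1 - t) * (\<Sum>k\<in>UNIV. augment v k * ln (augment v k)) + t * (\<Sum>k\<in>UNIV. augment w k * ln (augment w k))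
        - t * (1 - t) / 2 * A\<^sup>2"
    unfolding augment_convex_comb A_def using augment_nonneg[OF v] augment_nonneg[OF w] t
    by (intro sum_xlnx_strongly_convex) (auto simp: sum_augment)
  moreover have "t * (1 - t) / 2 * (l1norm (v - w))\<^sup>2 \<le> t * (1 - t) / 2 * A\<^sup>2"
    using t l1norm_diff_le_augment[of v w]
    by (intro mult_left_mono power_mono) (auto simp: l1norm_def A_def)
  ultimately show "- Ent ((1 - t) *\<^sub>R v + t *\<^sub>R w)
      \<le> (1 - t) * - Ent v + t * - Ent w - t * (1 - t) / 2 * (l1norm (v - w))\<^sup>2"
    unfolding Ent_augment by linarith
qed

lemma Ent_nonneg:
  assumes "v \<in> sub_simplex"
  shows "0 \<le> Ent v"
proof -
  have "augment v k * ln (augment v k) \<le> 0" for k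
  proof -
    have "augment v k \<le> (\<Sum>k\<in>UNIV. augment v k)"
      using augment_nonneg[OF assms] by (intro member_le_sum) auto
    moreover have "0 \<le> augment v k"
      using assms by (rule augment_nonneg)
    ultimately show ?thesis
      by (cases "augment v k = 0") (auto simp: sum_augment intro!: mult_nonneg_nonpos)
  qed
  then show ?thesis
    unfolding Ent_augment by (simp add: sum_nonpos)
qed

lemma Ent_le_ln_card:
  assumes "v \<in> sub_simplex"
  shows "Ent (v :: real^'d::finite) \<le> ln (CARD('d) + 1)"
  using sum_xlnx_ge_neg_ln_card[of UNIV "augment v"] augment_nonneg[OF assms]
  by (simp add: Ent_augment sum_augment card_UNIV_option)

section \<open>The domain\<close>

lemma mem_scaled_simplex_iff:
  assumes "0 \<le> a"
  shows "x \<in> scaled_simplex a \<longleftrightarrow> (\<forall>i. 0 \<le> x $ i) \<and> (\<Sum>i\<in>UNIV. x $ i) = a"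
proof
  assume "x \<in> scaled_simplex a"
  then obtain p where "p \<in> prob_simplex" "x = a *\<^sub>R p"
    by (auto simp: scaled_simplex_def)
  with assms show "(\<forall>i. 0 \<le> x $ i) \<and> (\<Sum>i\<in>UNIV. x $ i) = a"
    by (simp add: prob_simplex_def flip: sum_distrib_left)
next
  assume x: "(\<forall>i. 0 \<le> x $ i) \<and> (\<Sum>i\<in>UNIV. x $ i) = a"
  define p where "p = (if a = 0 then axis undefined 1 else (1 / a) *\<^sub>R x)"
  have "p \<in> prob_simplex"
    using x assms by (auto simp: p_def prob_simplex_def axis_def sum_divide_distrib[symmetric])
  moreover have "x = a *\<^sub>R p"
    using x sum_nonneg_eq_0_iff[of UNIV "($) x"] by (auto simp: p_def vec_eq_iff)
  ultimately show "x \<in> scaled_simplex a"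
    by (auto simp: scaled_simplex_def)
qed

lemma col_scaleR: "col (c *\<^sub>R M) j = c *\<^sub>R col M j"
  by (simp add: col_def vec_eq_iff)

lemma col_add: "col (M + N) j = col M j + col N j"
  by (simp add: col_def vec_eq_iff)

lemma col_diff: "col (M - N) j = col M j - col N j"
  by (simp add: col_def vec_eq_iff)

lemma mem_scaled_stochastic_iff: "M \<in> scaled_stochastic a \<longleftrightarrow> (\<forall>j. col M j \<in> scaled_simplex a)"
proof
  assume "M \<in> scaled_stochastic a"
  then show "\<forall>j. col M j \<in> scaled_simplex a"
    by (auto simp: scaled_stochastic_def col_stochastic_def scaled_simplex_def col_scaleR)
next
  assume "\<forall>j. col M j \<in> scaled_simplex a"
  then have "\<forall>j. \<exists>p. p \<in> prob_simplex \<and> col M j = a *\<^sub>R p"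
    by (auto simp: scaled_simplex_def)
  then obtain p where p: "\<And>j. p j \<in> prob_simplex" "\<And>j. col M j = a *\<^sub>R p j"
    by metis
  define N where "N = (\<chi> i j. p j $ i)"
  have "col N j = p j" for j
    by (simp add: N_def col_def vec_eq_iff)
  moreover have "M = a *\<^sub>R N"
    using p(2) by (simp add: N_def col_def vec_eq_iff)
  ultimately show "M \<in> scaled_stochastic a"
    using p(1) by (auto simp: scaled_stochastic_def col_stochastic_def)
qed

lemma scaled_simplex_convex_comb:
  assumes "x \<in> scaled_simplex a\<^sub>1" "y \<in> scaled_simplex a\<^sub>2" "0 \<le> a\<^sub>1" "0 \<le> a\<^sub>2" "0 \<le> u" "0 \<le> v"
  shows "u *\<^sub>R x + v *\<^sub>R y \<in> scaled_simplex (u * a\<^sub>1 + v * a\<^sub>2)"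
  using assms by (simp add: mem_scaled_simplex_iff sum.distrib flip: sum_distrib_left)

lemma scaled_simplex_subset_sub_simplex: "0 \<le> a \<Longrightarrow> a \<le> 1 \<Longrightarrow> scaled_simplex a \<subseteq> sub_simplex"
  by (auto simp: mem_scaled_simplex_iff sub_simplex_def)

lemma convex_Xdom:
  assumes "0 \<le> a"
  shows "convex (Xdom a b)"
proof (rule convexI)
  fix x y :: "('d::finite, 'h::finite) point" and u v :: real
  assume "x \<in> Xdom a b" "y \<in> Xdom a b" and uv: "0 \<le> u" "0 \<le> v" "u + v = 1"
  then obtain a\<^sub>1 a\<^sub>2 where a: "a\<^sub>1 \<in> {a..b}" "a\<^sub>2 \<in> {a..b}"
    and x: "fst x \<in> scaled_simplex a\<^sub>1" "\<And>h j. col (snd x $ h) j \<in> scaled_simplex a\<^sub>1"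
    and y: "fst y \<in> scaled_simplex a\<^sub>2" "\<And>h j. col (snd y $ h) j \<in> scaled_simplex a\<^sub>2"
    by (auto simp: Xdom_def mem_scaled_stochastic_iff)
  have "u * a + v * a \<le> u * a\<^sub>1 + v * a\<^sub>2" "u * a\<^sub>1 + v * a\<^sub>2 \<le> u * b + v * b"
    using a uv by (auto intro!: add_mono mult_left_mono)
  then have a': "u * a\<^sub>1 + v * a\<^sub>2 \<in> {a..b}"
    using uv by (simp flip: distrib_right)
  have "0 \<le> a\<^sub>1" "0 \<le> a\<^sub>2"
    using a assms by auto
  then have "fst (u *\<^sub>R x + v *\<^sub>R y) \<in> scaled_simplex (u * a\<^sub>1 + v * a\<^sub>2)"
    and "col (snd (u *\<^sub>R x + v *\<^sub>R y) $ h) j \<in> scaled_simplex (u * a\<^sub>1 + v * a\<^sub>2)" for h j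
    using scaled_simplex_convex_comb[OF x(1) y(1)] scaled_simplex_convex_comb[OF x(2) y(2)] uv
    by (simp_all add: col_add col_scaleR)
  then show "u *\<^sub>R x + v *\<^sub>R y \<in> Xdom a b"
    unfolding Xdom_def by (intro UN_I[OF a']) (auto simp: mem_Times_iff mem_scaled_stochastic_iff)
qed

lemma Xdom_sub_simplex:
  assumes "0 \<le> a" "b \<le> 1" "z \<in> Xdom a b"
  shows "fst z \<in> sub_simplex" "col (snd z $ h) j \<in> sub_simplex"
proof -
  obtain a' where "a' \<in> {a..b}" "fst z \<in> scaled_simplex a'" "col (snd z $ h) j \<in> scaled_simplex a'"
    using assms(3) by (auto simp: Xdom_def mem_scaled_stochastic_iff)
  with assms(1,2) scaled_simplex_subset_sub_simplex[of a'] show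
    "fst z \<in> sub_simplex" "col (snd z $ h) j \<in> sub_simplex"
    by auto
qed

section \<open>The regularizer and the norm\<close>

lemma power2_normdH:
  "(normdH z)\<^sup>2 = (l1norm (fst z))\<^sup>2 + (\<Sum>h\<in>UNIV. \<Sum>j\<in>UNIV. (l1norm (col (snd z $ h) j))\<^sup>2)"
  unfolding normdH_def by (simp add: sum_nonneg)

lemma sum_le_convex_comb:
  fixes f p q r :: "'i \<Rightarrow> real"
  assumes "\<And>i. i \<in> I \<Longrightarrow> f i \<le> (1 - t) * p i + t * q i - r i"
  shows "sum f I \<le> (1 - t) * sum p I + t * sum q I - sum r I"
proof -
  have "sum f I \<le> (\<Sum>i\<in>I. (1 - t) * p i + t * q i - r i)"
    by (rule sum_mono) (rule assms)
  also have "\<dots> = (1 - t) * sum p I + t * sum q I - sum r I"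
    by (simp add: sum.distrib sum_subtractf sum_distrib_left)
  finally show ?thesis .
qed

lemma Rreg_strongly_convex:
  assumes "0 \<le> a" "b \<le> 1"
  shows "strongly_convex_on (Xdom a b) normdH Rreg"
  unfolding strongly_convex_on_def
proof (intro ballI)
  fix x y :: "('d::finite, 'h::finite) point" and t :: real
  assume x: "x \<in> Xdom a b" and y: "y \<in> Xdom a b" and t: "t \<in> {0..1}"
  define c where "c = (1 - t) *\<^sub>R x + t *\<^sub>R y"
  define \<delta> where "\<delta> v w = t * (1 - t) / 2 * (l1norm (v - w))\<^sup>2" for v w :: "real^'d"
  define E where "E z h j = - Ent (col (snd z $ h) j)" for z :: "('d, 'h) point" and h j
  note Ent_sc = strongly_convex_onD[OF neg_Ent_strongly_convex _ _, of _ _ t]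
  have fst: "- Ent (fst c) \<le> (1 - t) * - Ent (fst x) + t * - Ent (fst y) - \<delta> (fst x) (fst y)"
    using Ent_sc[OF Xdom_sub_simplex(1)[OF assms x] Xdom_sub_simplex(1)[OF assms y]] t
    by (simp add: c_def \<delta>_def)
  have cols: "(\<Sum>h\<in>UNIV. \<Sum>j\<in>UNIV. E c h j)
      \<le> (1 - t) * (\<Sum>h\<in>UNIV. \<Sum>j\<in>UNIV. E x h j) + t * (\<Sum>h\<in>UNIV. \<Sum>j\<in>UNIV. E y h j)
        - (\<Sum>h\<in>UNIV. \<Sum>j\<in>UNIV. \<delta> (col (snd x $ h) j) (col (snd y $ h) j))"
    using Ent_sc[OF Xdom_sub_simplex(2)[OF assms x] Xdom_sub_simplex(2)[OF assms y]] t
    by (intro sum_le_convex_comb) (simp add: E_def c_def \<delta>_def col_add col_scaleR)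
  have norm: "t * (1 - t) / 2 * (normdH (x - y))\<^sup>2
      = \<delta> (fst x) (fst y) + (\<Sum>h\<in>UNIV. \<Sum>j\<in>UNIV. \<delta> (col (snd x $ h) j) (col (snd y $ h) j))"
    by (simp add: power2_normdH \<delta>_def col_diff distrib_left sum_distrib_left)
  have Rreg_E: "Rreg z = - Ent (fst z) + (\<Sum>h\<in>UNIV. \<Sum>j\<in>UNIV. E z h j)" for z
    by (simp add: Rreg_def E_def sum_negf)
  have "(1 - t) * Rreg x + t * Rreg y
      = ((1 - t) * - Ent (fst x) + t * - Ent (fst y))
        + ((1 - t) * (\<Sum>h\<in>UNIV. \<Sum>j\<in>UNIV. E x h j) + t * (\<Sum>h\<in>UNIV. \<Sum>j\<in>UNIV. E y h j))"
    by (simp add: Rreg_E algebra_simps)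
  then show "Rreg c \<le> (1 - t) * Rreg x + t * Rreg y - t * (1 - t) / 2 * (normdH (x - y))\<^sup>2"
    using Rreg_E[of c] fst cols norm by linarith
qed

lemma normdH_uminus: "normdH (- z) = normdH z"
  by (simp add: normdH_def l1norm_def col_def)

lemma l1norm_fst_le_normdH: "l1norm (fst z) \<le> normdH z"
  unfolding normdH_def by (rule real_le_rsqrt) (simp add: sum_nonneg)

lemma l1norm_col_le_normdH: "l1norm (col (snd z $ h) j) \<le> normdH z"
proof -
  have "(l1norm (col (snd z $ h) j))\<^sup>2 \<le> (\<Sum>j\<in>UNIV. (l1norm (col (snd z $ h) j))\<^sup>2)"
    by (rule member_le_sum) auto
  also have "\<dots> \<le> (\<Sum>h\<in>UNIV. \<Sum>j\<in>UNIV. (l1norm (col (snd z $ h) j))\<^sup>2)"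
    by (rule member_le_sum) (auto intro: sum_nonneg)
  finally show ?thesis
    unfolding normdH_def by (intro real_le_rsqrt) (simp add: add_increasing)
qed

lemma opnorm11_le_max_col:
  fixes M :: "real^'d::finite^'d"
  assumes "\<And>j. l1norm (col M j) \<le> c"
  shows "opnorm11 M \<le> c"
  unfolding opnorm11_def
proof (rule cSup_least)
  have "l1norm (axis undefined 1 :: real^'d) = 1"
    by (simp add: l1norm_def axis_def)
  then show "{l1norm (M *v x) |x. l1norm x = 1} \<noteq> {}"
    by blast
next
  fix r assume "r \<in> {l1norm (M *v x) |x. l1norm x = 1}"
  then obtain x where r: "r = l1norm (M *v x)" and x: "l1norm x = 1"
    by blast
  have "l1norm (M *v x) = (\<Sum>i\<in>UNIV. \<bar>\<Sum>j\<in>UNIV. M $ i $ j * x $ j\<bar>)"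
    by (simp add: l1norm_def matrix_vector_mult_def)
  also have "\<dots> \<le> (\<Sum>i\<in>UNIV. \<Sum>j\<in>UNIV. \<bar>M $ i $ j\<bar> * \<bar>x $ j\<bar>)"
    by (intro sum_mono order_trans[OF sum_abs]) (simp add: abs_mult)
  also have "\<dots> = (\<Sum>j\<in>UNIV. \<bar>x $ j\<bar> * l1norm (col M j))"
    by (subst sum.swap) (simp add: l1norm_def col_def sum_distrib_left mult.commute)
  also have "\<dots> \<le> (\<Sum>j\<in>UNIV. \<bar>x $ j\<bar> * c)"
    by (intro sum_mono mult_left_mono assms) simp
  also have "\<dots> = c"
    using x by (simp add: l1norm_def flip: sum_distrib_right)
  finally show "r \<le> c"
    using r by simp
qed

lemma opnorm11_le_normdH: "opnorm11 (snd z $ h) \<le> normdH z"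
  using l1norm_col_le_normdH by (rule opnorm11_le_max_col)

lemma Rreg_nonpos:
  assumes "0 \<le> a" "b \<le> 1" "z \<in> Xdom a b"
  shows "Rreg z \<le> 0"
proof -
  have "0 \<le> (\<Sum>h\<in>UNIV. \<Sum>j\<in>UNIV. Ent (col (snd z $ h) j))"
    using Ent_nonneg[OF Xdom_sub_simplex(2)[OF assms]] by (intro sum_nonneg)
  then show ?thesis
    using Ent_nonneg[OF Xdom_sub_simplex(1)[OF assms]] by (simp add: Rreg_def)
qed

lemma neg_Rreg_le:
  assumes "0 \<le> a" "b \<le> 1" "z \<in> Xdom (a :: real) b"
  shows "- Rreg (z :: ('d::finite, 'h::finite) point) \<le> (1 + CARD('h) * CARD('d)) * ln (CARD('d) + 1)"
proof -
  have "(\<Sum>h\<in>UNIV. \<Sum>j\<in>UNIV. Ent (col (snd z $ h) j)) \<le> (\<Sum>h\<in>(UNIV::'h set). \<Sum>j\<in>(UNIV::'d set). ln (CARD('d) + 1))"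
    using Ent_le_ln_card[OF Xdom_sub_simplex(2)[OF assms]] by (intro sum_mono)
  then show ?thesis
    using Ent_le_ln_card[OF Xdom_sub_simplex(1)[OF assms]] by (simp add: Rreg_def algebra_simps)
qed

lemma one_plus_mult_ln_one_plus_le:
  fixes d H :: real
  assumes d: "2 \<le> d" and H: "1 \<le> H"
  shows "(1 + H * d) * ln (1 + d) \<le> 4 * d * H * ln d"
proof -
  have "1 * 1 \<le> H * d"
    using d H by (intro mult_mono) auto
  then have "1 + H * d \<le> 2 * H * d"
    by simp
  moreover have "2 * d \<le> d * d"
    using d by (intro mult_right_mono) auto
  then have "1 + d \<le> d * d"
    using d by linarith
  then have "ln (1 + d) \<le> ln (d * d)"
    using d by (intro ln_mono) auto
  then have "ln (1 + d) \<le> 2 * ln d"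
    using d by (simp add: ln_mult)
  ultimately have "(1 + H * d) * ln (1 + d) \<le> (2 * H * d) * (2 * ln d)"
    using d H by (intro mult_mono) auto
  then show ?thesis
    by (simp add: algebra_simps)
qed

lemma Rreg_diff_le:
  assumes "0 \<le> a" "b \<le> 1" "x \<in> Xdom a b" "y \<in> Xdom a b" and d: "CARD('d) \<ge> 2"
  shows "Rreg y - Rreg (x :: ('d::finite, 'h::finite) point) \<le> 4 * CARD('d) * CARD('h) * ln CARD('d)"
  using Rreg_nonpos[OF assms(1,2,4)] neg_Rreg_le[OF assms(1,2,3)]
    one_plus_mult_ln_one_plus_le[of "CARD('d)" "CARD('h)"] d
  by simp

lemma lazy_md_iterate_iff_ftrl_leader: "lazy_md_iterate X \<eta> g t z \<longleftrightarrow> is_ftrl_leader X Rreg \<eta> g t z"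
  by (simp add: lazy_md_iterate_def is_ftrl_leader_def ftrl_objective_def)

lemma lazy_mirror_descent_Xdom:
  assumes "0 \<le> a" "b \<le> 1" "0 < \<eta>" "0 \<le> L"
    and "\<And>t. t \<in> {1..T} \<Longrightarrow> lazy_md_iterate (Xdom a b) \<eta> g t (z t)"
    and "\<And>t w. t \<in> {1..T} \<Longrightarrow> \<bar>inner (g t) w\<bar> \<le> L * normdH w"
  shows "lazy_mirror_descent (Xdom a b) Rreg normdH \<eta> L T g z"
  using assms convex_Xdom Rreg_strongly_convex normdH_uminus
  by unfold_locales (auto simp: lazy_md_iterate_iff_ftrl_leader abs_le_iff)

lemma tuned_step_size_bound:
  fixes c L T :: real
  assumes "0 < c" "0 < L" "0 < T"
  shows "2 * c / (sqrt c / (L * sqrt T)) + sqrt c / (L * sqrt T) * L\<^sup>2 * T \<le> L * sqrt (16 * c * T)"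
proof -
  define s r where "s = sqrt c" and "r = sqrt T"
  have s: "0 < s" "c = s\<^sup>2" and r: "0 < r" "T = r\<^sup>2"
    using assms by (simp_all add: s_def r_def)
  have "sqrt (16 * c * T) = 4 * s * r"
    using s r by (simp add: real_sqrt_mult real_sqrt_abs)
  moreover have "2 * c / (s / (L * r)) + s / (L * r) * L\<^sup>2 * T = 3 * L * s * r"
    using s r assms by (simp add: field_simps power2_eq_square)
  ultimately show ?thesis
    using s r assms by (simp add: s_def[symmetric] r_def[symmetric])
qed

theorem corollary1:
  fixes ell :: "nat \<Rightarrow> ('d::finite, 'h::finite) point \<Rightarrow> real"
    and z g :: "nat \<Rightarrow> ('d, 'h) point"
    and a b L :: real and T :: nat
  assumes d2: "CARD('d) \<ge> 2"
    and ab: "0 \<le> a" "a \<le> b" "b \<le> 1"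
    and L: "L > 0" and T: "T \<ge> 1"
    and cvx: "\<And>t. t \<in> {1..T} \<Longrightarrow> convex_on (Xdom a b) (ell t)"
    and lip: "\<And>t x y. t \<in> {1..T} \<Longrightarrow> x \<in> Xdom a b \<Longrightarrow> y \<in> Xdom a b \<Longrightarrow>
                \<bar>ell t x - ell t y\<bar> \<le> L * normdH (x - y)"
    and iter: "\<And>t. t \<in> {1..T} \<Longrightarrow>
                lazy_md_iterate (Xdom a b) (sqrt (2 * CARD('d) * CARD('h) * ln (CARD('d))) / (L * sqrt T)) g t (z t)"
    and subgrad: "\<And>t y. t \<in> {1..T} \<Longrightarrow> y \<in> Xdom a b \<Longrightarrow>
                ell t y \<ge> ell t (z t) + inner (g t) (y - z t)"
    and grad_dual: "\<And>t w. t \<in> {1..T} \<Longrightarrow> \<bar>inner (g t) w\<bar> \<le> L * normdH w"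
  shows "(\<forall>y\<in>Xdom a b. (\<Sum>t\<in>{1..T}. ell t (z t)) - (\<Sum>t\<in>{1..T}. ell t y)
            \<le> L * sqrt (32 * CARD('d) * CARD('h) * ln (CARD('d)) * T))
       \<and> (\<forall>t\<in>{1..T-1}.
            l1norm (fst (z t) - fst (z (t+1))) \<le> sqrt (2 * CARD('d) * CARD('h) * ln (CARD('d))) / sqrt T
          \<and> (\<forall>h. opnorm11 (snd (z t) $ h - snd (z (t+1)) $ h)
                 \<le> sqrt (2 * CARD('d) * CARD('h) * ln (CARD('d))) / sqrt T))"
proof -
  define c where "c = 2 * real CARD('d) * real CARD('h) * ln (real CARD('d))"
  define \<eta> where "\<eta> = sqrt c / (L * sqrt T)"
  have c: "0 < c"
    using d2 by (simp add: c_def)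
  interpret lazy_mirror_descent "Xdom a b" Rreg normdH \<eta> L T g z
    using ab c L T iter grad_dual
    by (intro lazy_mirror_descent_Xdom) (auto simp: \<eta>_def c_def)
  have regret: "(\<Sum>t\<in>{1..T}. ell t (z t)) - (\<Sum>t\<in>{1..T}. ell t y)
      \<le> L * sqrt (32 * CARD('d) * CARD('h) * ln (CARD('d)) * T)" if y: "y \<in> Xdom a b" for y
  proof -
    have "(\<Sum>t\<in>{1..T}. ell t (z t)) - (\<Sum>t\<in>{1..T}. ell t y) \<le> 2 * c / \<eta> + \<eta> * L\<^sup>2 * T"
      using Rreg_diff_le[OF ab(1,3) leader_in_X y d2, of 1] T y subgrad
      by (intro convex_regret) (auto simp: c_def mult_ac)
    also have "\<dots> \<le> L * sqrt (16 * c * T)"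
      unfolding \<eta>_def using c L T by (intro tuned_step_size_bound) auto
    also have "\<dots> = L * sqrt (32 * CARD('d) * CARD('h) * ln (CARD('d)) * T)"
      by (simp add: c_def)
    finally show ?thesis .
  qed
  have stable: "normdH (z t - z (t + 1)) \<le> sqrt c / sqrt T" if "t \<in> {1..T-1}" for t
  proof -
    have "t \<in> {1..<T}"
      using that T by auto
    from stability[OF this] show ?thesis
      using L by (simp add: \<eta>_def)
  qed
  have "l1norm (fst (z t) - fst (z (t + 1))) \<le> sqrt c / sqrt T"
    and "opnorm11 (snd (z t) $ h - snd (z (t + 1)) $ h) \<le> sqrt c / sqrt T"
    if "t \<in> {1..T-1}" for t h
    using l1norm_fst_le_normdH[of "z t - z (t + 1)"] opnorm11_le_normdH[of "z t - z (t + 1)" h]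
      stable[OF that]
    by simp_all
  with regret show ?thesis
    by (simp add: c_def)
qed

end
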